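(* Let $m\ge1$ and let $\mathcal{E}:\ w''=w^m\Phi(z,w,w'/w^m)$ and $\mathcal{E}^*:\ w''=w^m\Phi^*(z,w,w'/w^m)$ be two ODEs, where $\Phi,\Phi^*\in\mathbb{C}[[z,w,\zeta]]$ satisfy $\Phi,\Phi^*=O(\zeta^2)$. Write $\Phi=\sum_{k\ge2}\Phi_k(z,w)\zeta^k$, $\Phi_2=\sum_jA_j(w)z^j$, $\Phi_3=\sum_jB_j(w)z^j$, and similarly $A_j^*,B_j^*$ for $\Phi^*$. If there exists a transformation from $\mathcal{E}$ to $\mathcal{E}^*$ of the admissible kind described below, then $A_0(0)=A_0^*(0)$, $A_1(0)=A_1^*(0)$, $B_0(0)=B_0^*(0)$, $B_1(0)=B_1^*(0)$.
   Context: An admissible transformation is an invertible formal map $(z,w)\mapsto(z+f(z,w),\ w+wg_0(w)+w^mg(z,w))$ with $f(0,0)=0$, $f_z(0,0)=0$, $g_0(0)=0$, $g(z,w)$ divisible by $zw$, and $g_0^{(\ell)}(0)\in\mathbb{R}$ for $\ell\le m-1$, which transforms $\mathcal{E}$ into $\mathcal{E}^*$, i.e. maps graphs of solutions of one equation to graphs of solutions of the other (for formal objects, in the sense of the standard transformation rule for second order ODEs under point transformations). *)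

theory Defs
  imports Complex_Main
begin

text \<open>Formal power series in three variables (z, w, zeta) over the complex numbers,
  represented by their coefficient functions: p i j k is the coefficient of
  z^i w^j zeta^k.\<close>

type_synonym ps3 = "nat \<Rightarrow> nat \<Rightarrow> nat \<Rightarrow> complex"

definition ps_const :: "complex \<Rightarrow> ps3" where
  "ps_const c = (\<lambda>i j k. if i = 0 \<and> j = 0 \<and> k = 0 then c else 0)"

definition ps_z :: ps3 where
  "ps_z = (\<lambda>i j k. if i = 1 \<and> j = 0 \<and> k = 0 then 1 else 0)"

definition ps_w :: ps3 where
  "ps_w = (\<lambda>i j k. if i = 0 \<and> j = 1 \<and> k = 0 then 1 else 0)"

definition ps_zeta :: ps3 where
  "ps_zeta = (\<lambda>i j k. if i = 0 \<and> j = 0 \<and> k = 1 then 1 else 0)"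

definition ps_add :: "ps3 \<Rightarrow> ps3 \<Rightarrow> ps3" where
  "ps_add p q = (\<lambda>i j k. p i j k + q i j k)"

definition ps_diff :: "ps3 \<Rightarrow> ps3 \<Rightarrow> ps3" where
  "ps_diff p q = (\<lambda>i j k. p i j k - q i j k)"

definition ps_mult :: "ps3 \<Rightarrow> ps3 \<Rightarrow> ps3" where
  "ps_mult p q = (\<lambda>i j k. \<Sum>a\<le>i. \<Sum>b\<le>j. \<Sum>c\<le>k. p a b c * q (i - a) (j - b) (k - c))"

fun ps_pow :: "ps3 \<Rightarrow> nat \<Rightarrow> ps3" where
  "ps_pow p 0 = ps_const 1"
| "ps_pow p (Suc n) = ps_mult p (ps_pow p n)"

definition ps_dz :: "ps3 \<Rightarrow> ps3" where
  "ps_dz p = (\<lambda>i j k. of_nat (i + 1) * p (i + 1) j k)"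

definition ps_dw :: "ps3 \<Rightarrow> ps3" where
  "ps_dw p = (\<lambda>i j k. of_nat (j + 1) * p i (j + 1) k)"

definition ps_dzeta :: "ps3 \<Rightarrow> ps3" where
  "ps_dzeta p = (\<lambda>i j k. of_nat (k + 1) * p i j (k + 1))"

text \<open>Formal substitution P(A,B,C), meaningful when A, B, C have zero constant term:
  then only monomials of total degree at most i+j+k of P contribute to the
  coefficient of z^i w^j zeta^k.\<close>
definition ps_comp :: "ps3 \<Rightarrow> ps3 \<Rightarrow> ps3 \<Rightarrow> ps3 \<Rightarrow> ps3" where
  "ps_comp P A B C = (\<lambda>i j k.
     \<Sum>a\<le>i+j+k. \<Sum>b\<le>i+j+k-a. \<Sum>c\<le>i+j+k-a-b.
        P a b c * ps_mult (ps_pow A a) (ps_mult (ps_pow B b) (ps_pow C c)) i j k)"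

definition ps_of2 :: "(nat \<Rightarrow> nat \<Rightarrow> complex) \<Rightarrow> ps3" where
  "ps_of2 f = (\<lambda>i j k. if k = 0 then f i j else 0)"

definition ps_of_w :: "(nat \<Rightarrow> complex) \<Rightarrow> ps3" where
  "ps_of_w g = (\<lambda>i j k. if i = 0 \<and> k = 0 then g j else 0)"

definition zeta_free :: "ps3 \<Rightarrow> bool" where
  "zeta_free p \<longleftrightarrow> (\<forall>i j k. 0 < k \<longrightarrow> p i j k = 0)"

text \<open>Total derivative for the ODE w'' = w^m Phi(z,w,w'/w^m), written in the
  coordinates (z,w,zeta) with w' = w^m zeta:
  D = d/dz + w^m zeta d/dw + (Phi - m w^(m-1) zeta^2) d/dzeta.\<close>
definition ps_D :: "nat \<Rightarrow> ps3 \<Rightarrow> ps3 \<Rightarrow> ps3" where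
  "ps_D m Phi h =
     ps_add (ps_dz h)
      (ps_add (ps_mult (ps_mult (ps_pow ps_w m) ps_zeta) (ps_dw h))
        (ps_mult (ps_diff Phi (ps_mult (ps_const (of_nat m))
                     (ps_mult (ps_pow ps_w (m - 1)) (ps_pow ps_zeta 2))))
                 (ps_dzeta h)))"

text \<open>The point transformation (z,w) to (Z,W) maps solutions of
  w'' = w^m Phi(z,w,w'/w^m) to solutions of w'' = w^m Phis(z,w,w'/w^m).
  With P = DW/DZ the new slope and Pi = P/W^m, the standard rule
  D P = DZ * F*(Z,W,P) becomes (after division by W^(m-1))
  W * D Pi + m * DW * Pi = W * DZ * Phis(Z,W,Pi), where Pi is the
  (unique) series with W^m * DZ * Pi = DW.\<close>
definition transforms_ode :: "nat \<Rightarrow> ps3 \<Rightarrow> ps3 \<Rightarrow> ps3 \<Rightarrow> ps3 \<Rightarrow> bool" where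
  "transforms_ode m Phi Phis Z W \<longleftrightarrow>
     (\<exists>Pi. ps_mult (ps_pow W m) (ps_mult (ps_D m Phi Z) Pi) = ps_D m Phi W \<and>
           ps_add (ps_mult W (ps_D m Phi Pi))
                  (ps_mult (ps_const (of_nat m)) (ps_mult (ps_D m Phi W) Pi))
           = ps_mult W (ps_mult (ps_D m Phi Z) (ps_comp Phis Z W Pi)))"

definition formal_map_invertible :: "ps3 \<Rightarrow> ps3 \<Rightarrow> bool" where
  "formal_map_invertible Z W \<longleftrightarrow>
     (\<exists>U V. zeta_free U \<and> zeta_free V \<and> U 0 0 0 = 0 \<and> V 0 0 0 = 0 \<and>
        ps_comp Z U V ps_zeta = ps_z \<and> ps_comp W U V ps_zeta = ps_w \<and>
        ps_comp U Z W ps_zeta = ps_z \<and> ps_comp V Z W ps_zeta = ps_w)"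

definition admissible ::
  "nat \<Rightarrow> ps3 \<Rightarrow> ps3 \<Rightarrow> (nat \<Rightarrow> nat \<Rightarrow> complex) \<Rightarrow> (nat \<Rightarrow> complex)
    \<Rightarrow> (nat \<Rightarrow> nat \<Rightarrow> complex) \<Rightarrow> bool" where
  "admissible m Phi Phis f g0 g \<longleftrightarrow>
     f 0 0 = 0 \<and> f 1 0 = 0 \<and> g0 0 = 0 \<and>
     (\<forall>i j. i = 0 \<or> j = 0 \<longrightarrow> g i j = 0) \<and>
     (\<forall>l \<le> m - 1. g0 l \<in> \<real>) \<and>
     (let Z = ps_add ps_z (ps_of2 f);
          W = ps_add ps_w (ps_add (ps_mult ps_w (ps_of_w g0))
                                  (ps_mult (ps_pow ps_w m) (ps_of2 g)))
      in formal_map_invertible Z W \<and> transforms_ode m Phi Phis Z W)"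

text \<open>A_j(w) = coefficient of z^j zeta^2 in Phi; B_j(w) = that of z^j zeta^3;
  coef_A Phi j l is the coefficient of w^l in A_j, so A_j(0) = coef_A Phi j 0.\<close>
definition coef_A :: "ps3 \<Rightarrow> nat \<Rightarrow> nat \<Rightarrow> complex" where
  "coef_A Phi j l = Phi j l 2"

definition coef_B :: "ps3 \<Rightarrow> nat \<Rightarrow> nat \<Rightarrow> complex" where
  "coef_B Phi j l = Phi j l 3"

end

theory Submission
  imports Defs
begin

text \<open>Restrict everything to the line w = 0, and let Pi be the rescaled slope of the
  transformed solutions. Since W = w + O(w^2) and D W = w^m \<zeta> + O(w^(m+1)), the
  w^m-coefficient of W^m (D Z) Pi = D W says (D Z) Pi = \<zeta> on w = 0, and the w^1-coefficient
  of the second transformation equation is a first-order equation for Pi(z,0,\<zeta>). As \<Phi> and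
  \<Phi>* are O(\<zeta>^2), its \<zeta>^1-part forces Pi(z,0,\<zeta>)/\<zeta> to be independent of z; by induction on
  the order in z this gives Pi = \<zeta> and Z = z on w = 0. The equation then collapses to
  \<Phi>(z,0,\<zeta>) = \<Phi>*(z,0,\<zeta>) (for m = 1 the term -m w^(m-1) \<zeta>^2 of D cancels against
  m (D W) Pi), which contains the four identities.\<close>

definition ps_monom :: "nat \<Rightarrow> nat \<Rightarrow> nat \<Rightarrow> ps3" where
  "ps_monom a b c = (\<lambda>i j k. if i = a \<and> j = b \<and> k = c then 1 else 0)"

lemma sum_atMost_eq_single:
  fixes F :: "nat \<Rightarrow> 'a::comm_monoid_add"
  assumes "\<And>x. x \<le> i \<Longrightarrow> x \<noteq> a \<Longrightarrow> F x = 0"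
  shows "(\<Sum>x\<le>i. F x) = (if a \<le> i then F a else 0)"
proof -
  have "(\<Sum>x\<le>i. F x) = (\<Sum>x\<le>i. if x = a then F a else 0)"
    using assms by (intro sum.cong) auto
  then show ?thesis by simp
qed

lemma ps_mult_monom_left:
  "ps_mult (ps_monom a b c) q i j k =
     (if a \<le> i \<and> b \<le> j \<and> c \<le> k then q (i - a) (j - b) (k - c) else 0)"
  unfolding ps_mult_def ps_monom_def
  by (simp add: sum_atMost_eq_single[where a=a] sum_atMost_eq_single[where a=b]
      sum_atMost_eq_single[where a=c])

lemma ps_mult_monom:
  "ps_mult (ps_monom a b c) (ps_monom a' b' c') = ps_monom (a + a') (b + b') (c + c')"
  by (auto simp: ps_mult_monom_left fun_eq_iff) (auto simp: ps_monom_def)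

lemma ps_const_one: "ps_const 1 = ps_monom 0 0 0"
  by (simp add: ps_const_def ps_monom_def)

lemma ps_pow_monom: "ps_pow (ps_monom a b c) n = ps_monom (n * a) (n * b) (n * c)"
  by (induction n) (simp_all add: ps_const_one ps_mult_monom)

lemma ps_variables_monom:
  "ps_z = ps_monom 1 0 0" "ps_w = ps_monom 0 1 0" "ps_zeta = ps_monom 0 0 1"
  by (simp_all add: ps_z_def ps_w_def ps_zeta_def ps_monom_def)

lemma ps_mult_const_coeff: "ps_mult (ps_const c) q i j k = c * q i j k"
  unfolding ps_mult_def ps_const_def by (simp add: sum_atMost_eq_single[where a=0])

definition ps_w_divisible :: "ps3 \<Rightarrow> nat \<Rightarrow> bool" where
  "ps_w_divisible p n \<longleftrightarrow> (\<forall>i j k. j < n \<longrightarrow> p i j k = 0)"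

definition ps_lowest_w_pow :: "ps3 \<Rightarrow> nat \<Rightarrow> bool" where
  "ps_lowest_w_pow p n \<longleftrightarrow>
     ps_w_divisible p n \<and> (\<forall>i k. p i n k = (if i = 0 \<and> k = 0 then 1 else 0))"

lemma ps_w_divisible_0 [simp]: "ps_w_divisible p 0"
  by (simp add: ps_w_divisible_def)

lemma ps_w_divisible_mono: "ps_w_divisible p n \<Longrightarrow> n' \<le> n \<Longrightarrow> ps_w_divisible p n'"
  by (simp add: ps_w_divisible_def)

lemma ps_w_divisible_mult:
  assumes "ps_w_divisible p n" "ps_w_divisible q n'"
  shows "ps_w_divisible (ps_mult p q) (n + n')"
  unfolding ps_w_divisible_def ps_mult_def
proof (intro allI impI sum.neutral ballI)
  fix i j k a b c
  assume "j < n + n'" "b \<in> {..j}"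
  then show "p a b c * q (i - a) (j - b) (k - c) = 0"
    using assms unfolding ps_w_divisible_def by (cases "b < n") auto
qed

lemma ps_w_divisible_pow:
  assumes "ps_w_divisible p 1"
  shows "ps_w_divisible (ps_pow p n) n"
proof (induction n)
  case 0
  then show ?case by (simp add: ps_w_divisible_def)
next
  case (Suc n)
  then show ?case using ps_w_divisible_mult[OF assms Suc.IH] by simp
qed

lemma ps_mult_w_divisible_coeff:
  assumes "ps_w_divisible p n" "ps_w_divisible q n'"
  shows "ps_mult p q i (n + n') k = (\<Sum>a\<le>i. \<Sum>c\<le>k. p a n c * q (i - a) n' (k - c))"
proof -
  have "p a b c * q (i - a) (n + n' - b) (k - c) = 0" if "b \<noteq> n" "b \<le> n + n'" for a b c
  proof (cases "b < n")
    case False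
    with that have "n + n' - b < n'" by arith
    with assms(2) show ?thesis by (simp add: ps_w_divisible_def)
  qed (use assms(1) in \<open>simp add: ps_w_divisible_def\<close>)
  then show ?thesis
    unfolding ps_mult_def
    by (subst sum_atMost_eq_single[where a=n]) (auto intro!: sum.neutral)
qed

lemma ps_mult_lowest_w_pow_coeff:
  assumes "ps_lowest_w_pow p n" "ps_w_divisible q n'"
  shows "ps_mult p q i (n + n') k = q i n' k"
  using assms unfolding ps_lowest_w_pow_def
  by (simp add: ps_mult_w_divisible_coeff sum_atMost_eq_single[where a=0])

lemma ps_lowest_w_pow_mult:
  assumes "ps_lowest_w_pow p n" "ps_lowest_w_pow q n'"
  shows "ps_lowest_w_pow (ps_mult p q) (n + n')"
proof -
  have "ps_w_divisible q n'" using assms(2) by (simp add: ps_lowest_w_pow_def)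
  then show ?thesis
    using assms ps_mult_lowest_w_pow_coeff[OF assms(1)] ps_w_divisible_mult
    unfolding ps_lowest_w_pow_def by simp
qed

lemma ps_lowest_w_pow_pow: "ps_lowest_w_pow p 1 \<Longrightarrow> ps_lowest_w_pow (ps_pow p n) n"
proof (induction n)
  case 0
  then show ?case by (simp add: ps_lowest_w_pow_def ps_w_divisible_def ps_const_def)
next
  case (Suc n)
  then show ?case using ps_lowest_w_pow_mult[of p 1 "ps_pow p n" n] by simp
qed

definition ps_agree_w0 :: "nat \<Rightarrow> ps3 \<Rightarrow> ps3 \<Rightarrow> bool" where
  "ps_agree_w0 N p q \<longleftrightarrow> (\<forall>i\<le>N. \<forall>k. p i 0 k = q i 0 k)"

lemma ps_mult_coeff_w0:
  "ps_mult p q i 0 k = (\<Sum>a\<le>i. \<Sum>c\<le>k. p a 0 c * q (i - a) 0 (k - c))"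
  by (simp add: ps_mult_def)

lemma ps_agree_w0_mono: "ps_agree_w0 N p q \<Longrightarrow> M \<le> N \<Longrightarrow> ps_agree_w0 M p q"
  by (simp add: ps_agree_w0_def)

lemma ps_agree_w0_mult:
  assumes "ps_agree_w0 N p p'" "ps_agree_w0 N q q'"
  shows "ps_agree_w0 N (ps_mult p q) (ps_mult p' q')"
  using assms unfolding ps_agree_w0_def ps_mult_coeff_w0 by (intro allI impI sum.cong) auto

lemma ps_agree_w0_pow: "ps_agree_w0 N p q \<Longrightarrow> ps_agree_w0 N (ps_pow p n) (ps_pow q n)"
  by (induction n) (simp_all add: ps_agree_w0_mult, simp add: ps_agree_w0_def)

lemma ps_comp_coeff_w0:
  assumes "ps_w_divisible B 1" "ps_agree_w0 N A ps_z" "ps_agree_w0 N C ps_zeta" "i \<le> N"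
  shows "ps_comp P A B C i 0 k = P i 0 k"
proof -
  have monomial: "ps_mult (ps_pow A a) (ps_mult (ps_pow B b) (ps_pow C c)) i 0 k =
    (if a = i \<and> b = 0 \<and> c = k then 1 else 0)" for a b c
  proof (cases "b = 0")
    case True
    have "ps_agree_w0 N (ps_mult (ps_pow A a) (ps_pow C c))
                        (ps_mult (ps_pow ps_z a) (ps_pow ps_zeta c))"
      using assms(2,3) by (intro ps_agree_w0_mult ps_agree_w0_pow)
    moreover have "ps_mult (ps_pow B b) (ps_pow C c) = ps_pow C c"
      using True by (simp add: fun_eq_iff ps_mult_const_coeff)
    ultimately show ?thesis
      using True assms(4)
      by (simp add: ps_agree_w0_def ps_variables_monom ps_pow_monom ps_mult_monom)
        (auto simp: ps_monom_def)
  next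
    case False
    then have "ps_w_divisible (ps_mult (ps_pow B b) (ps_pow C c)) 1"
      using ps_w_divisible_mult[OF ps_w_divisible_pow[OF assms(1)], of "ps_pow C c" 0]
      by (auto simp: ps_w_divisible_def)
    with False show ?thesis
      by (subst ps_mult_coeff_w0) (simp add: ps_w_divisible_def)
  qed
  show ?thesis
    unfolding ps_comp_def monomial
    by (simp add: sum_atMost_eq_single[where a=i] sum_atMost_eq_single[where a=0]
        sum_atMost_eq_single[where a=k])
qed

lemma ps_D_coeff:
  "ps_D m Phi h i j k = of_nat (i + 1) * h (i + 1) j k
     + (if m \<le> j \<and> 1 \<le> k then of_nat (j - m + 1) * h i (j - m + 1) (k - 1) else 0)
     + ps_mult (ps_diff Phi (ps_mult (ps_const (of_nat m))
         (ps_mult (ps_pow ps_w (m - 1)) (ps_pow ps_zeta 2)))) (ps_dzeta h) i j k"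
  unfolding ps_D_def ps_add_def
  by (simp add: ps_variables_monom ps_pow_monom ps_mult_monom ps_mult_monom_left
      ps_dz_def ps_dw_def add.assoc)

lemma ps_D_zeta_free_coeff:
  assumes "zeta_free h"
  shows "ps_D m Phi h i j k = of_nat (i + 1) * h (i + 1) j k
     + (if m \<le> j \<and> 1 \<le> k then of_nat (j - m + 1) * h i (j - m + 1) (k - 1) else 0)"
proof -
  have "ps_dzeta h = (\<lambda>i j k. 0)"
    using assms by (simp add: ps_dzeta_def zeta_free_def fun_eq_iff)
  then show ?thesis by (simp add: ps_D_coeff ps_mult_def)
qed

lemma ps_D_coeff_w0:
  assumes "1 \<le> m"
  shows "ps_D m Phi h i 0 k = of_nat (i + 1) * h (i + 1) 0 k
     + (\<Sum>a\<le>i. \<Sum>c\<le>k. (Phi a 0 c - (if a = 0 \<and> m = 1 \<and> c = 2 then 1 else 0))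
                          * (of_nat (k - c + 1) * h (i - a) 0 (k - c + 1)))"
  using assms
  by (simp add: ps_D_coeff ps_mult_coeff_w0 ps_diff_def ps_mult_const_coeff ps_variables_monom
      ps_pow_monom ps_mult_monom ps_dzeta_def)
    (auto simp: ps_monom_def numeral_2_eq_2 intro!: sum.cong)

lemma transforms_ode_coeffs_w0:
  assumes m: "1 \<le> m" and tr: "transforms_ode m Phi Phis Z W"
    and W: "zeta_free W" "ps_lowest_w_pow W 1" "\<And>i j k. j \<le> m \<Longrightarrow> W (Suc i) j k = 0"
  obtains Pi where
    "\<And>i k. ps_mult (ps_D m Phi Z) Pi i 0 k = (if i = 0 \<and> k = 1 then 1 else 0)"
    "\<And>i k. ps_D m Phi Pi i 0 k + (if m = 1 \<and> 1 \<le> k then Pi i 0 (k - 1) else 0)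
       = ps_mult (ps_D m Phi Z) (ps_comp Phis Z W Pi) i 0 k"
proof -
  define DW where "DW = ps_D m Phi W"
  obtain Pi where eq1: "ps_mult (ps_pow W m) (ps_mult (ps_D m Phi Z) Pi) = DW"
    and eq2: "ps_add (ps_mult W (ps_D m Phi Pi)) (ps_mult (ps_const (of_nat m)) (ps_mult DW Pi))
              = ps_mult W (ps_mult (ps_D m Phi Z) (ps_comp Phis Z W Pi))"
    using tr unfolding transforms_ode_def DW_def by blast
  have W1: "W i 1 k = (if i = 0 \<and> k = 0 then 1 else 0)" for i k
    using W(2) by (simp add: ps_lowest_w_pow_def)
  have DW_div: "ps_w_divisible DW m" and DW_m: "DW i m k = ps_zeta i 0 k" for i k
    using W(3) W1 unfolding DW_def ps_D_zeta_free_coeff[OF W(1)] ps_w_divisible_def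
    by (auto simp: ps_zeta_def)
  have slope: "ps_mult (ps_D m Phi Z) Pi i 0 k = (if i = 0 \<and> k = 1 then 1 else 0)" for i k
  proof -
    have "ps_mult (ps_D m Phi Z) Pi i 0 k
        = ps_mult (ps_pow W m) (ps_mult (ps_D m Phi Z) Pi) i (m + 0) k"
      using ps_mult_lowest_w_pow_coeff[OF ps_lowest_w_pow_pow[OF W(2)] ps_w_divisible_0]
      by simp
    then show ?thesis using eq1 DW_m by (simp add: ps_zeta_def)
  qed
  have "of_nat m * ps_mult DW Pi i 1 k = (if m = 1 \<and> 1 \<le> k then Pi i 0 (k - 1) else 0)"
    for i k
  proof (cases "m = 1")
    case True
    then have "ps_mult DW Pi i 1 k = ps_mult ps_zeta Pi i 0 k"
      using ps_mult_w_divisible_coeff[OF DW_div, of Pi 0] DW_m by (simp add: ps_mult_coeff_w0)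
    with True show ?thesis by (simp add: ps_variables_monom ps_mult_monom_left)
  next
    case False
    then have "ps_w_divisible (ps_mult DW Pi) 2"
      using m ps_w_divisible_mono[OF ps_w_divisible_mult[OF DW_div, of Pi 0]] by simp
    with False show ?thesis by (simp add: ps_w_divisible_def)
  qed
  moreover have "ps_mult W q i 1 k = q i 0 k" for q i k
    using ps_mult_lowest_w_pow_coeff[OF W(2), of q 0] by simp
  ultimately have "ps_D m Phi Pi i 0 k + (if m = 1 \<and> 1 \<le> k then Pi i 0 (k - 1) else 0)
      = ps_mult (ps_D m Phi Z) (ps_comp Phis Z W Pi) i 0 k" for i k
    using fun_cong[OF fun_cong[OF fun_cong[OF eq2]], of i 1 k]
    by (simp add: ps_add_def ps_mult_const_coeff)
  with slope show ?thesis by (rule that)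
qed

text \<open>The last two assumptions are the conclusions of \<open>transforms_ode_coeffs_w0\<close>: the
  w^m-coefficient of the first and the w^1-coefficient of the second transformation equation.\<close>

locale transformation_on_w0 =
  fixes m :: nat and Phi Phis Z W Pi :: ps3
  assumes m_pos: "1 \<le> m"
    and Phi_w0: "\<And>i k. k < 2 \<Longrightarrow> Phi i 0 k = 0"
    and Phis_w0: "\<And>i k. k < 2 \<Longrightarrow> Phis i 0 k = 0"
    and Z_zeta_free: "zeta_free Z" and Z_00: "Z 0 0 0 = 0" and Z_10: "Z 1 0 0 = 1"
    and W_w_divisible: "ps_w_divisible W 1"
    and slope_w0: "\<And>i k. ps_mult (ps_D m Phi Z) Pi i 0 k = (if i = 0 \<and> k = 1 then 1 else 0)"
    and slope_equation_w0:
      "\<And>i k. ps_D m Phi Pi i 0 k + (if m = 1 \<and> 1 \<le> k then Pi i 0 (k - 1) else 0)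
              = ps_mult (ps_D m Phi Z) (ps_comp Phis Z W Pi) i 0 k"
begin

lemma DZ_mult_coeff_w0:
  "ps_mult (ps_D m Phi Z) q i 0 k = (\<Sum>a\<le>i. of_nat (a + 1) * Z (a + 1) 0 0 * q (i - a) 0 k)"
  using m_pos Z_zeta_free unfolding ps_mult_coeff_w0 ps_D_zeta_free_coeff[OF Z_zeta_free]
  by (intro sum.cong refl) (simp add: sum_atMost_eq_single[where a=0] zeta_free_def)

lemma DZ_mult_coeff_w0_eq:
  assumes "ps_agree_w0 (Suc N) Z ps_z" "i \<le> N"
  shows "ps_mult (ps_D m Phi Z) q i 0 k = q i 0 k"
proof -
  have "Z (a + 1) 0 0 = (if a = 0 then 1 else 0)" if "a \<le> i" for a
    using assms that by (simp add: ps_agree_w0_def ps_z_def)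
  then show ?thesis
    unfolding DZ_mult_coeff_w0 by (simp add: sum_atMost_eq_single[where a=0])
qed

lemma Pi_and_Z_agree_w0: "ps_agree_w0 N Pi ps_zeta \<and> ps_agree_w0 (Suc N) Z ps_z"
proof (induction N)
  case 0
  have "Pi 0 0 k = ps_zeta 0 0 k" for k
    using slope_w0[of 0 k] Z_10 by (simp add: DZ_mult_coeff_w0 ps_zeta_def)
  moreover have "Z i 0 k = ps_z i 0 k" if "i \<le> 1" for i k
    using that Z_00 Z_10 Z_zeta_free
    by (cases "k = 0") (auto simp: ps_z_def zeta_free_def le_Suc_eq)
  ultimately show ?case by (simp add: ps_agree_w0_def)
next
  case (Suc N)
  then have Pi_agree: "ps_agree_w0 N Pi ps_zeta" and Z_agree: "ps_agree_w0 (Suc N) Z ps_z"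
    by simp_all
  have "Pi N 0 0 = 0"
    using Pi_agree by (simp add: ps_agree_w0_def ps_zeta_def)
  then have "of_nat (Suc N) * Pi (Suc N) 0 1 = ps_comp Phis Z W Pi N 0 1"
    using slope_equation_w0[of N 1] Phi_w0
    by (simp add: ps_D_coeff_w0[OF m_pos] DZ_mult_coeff_w0_eq[OF Z_agree] split: if_splits)
  also have "\<dots> = 0"
    using ps_comp_coeff_w0[OF W_w_divisible ps_agree_w0_mono[OF Z_agree] Pi_agree] Phis_w0
    by simp
  finally have Pi_1: "Pi (Suc N) 0 1 = 0" by (simp del: of_nat_Suc)
  have Pi_0: "Pi 0 0 k = (if k = 1 then 1 else 0)" for k
    using Pi_agree by (simp add: ps_agree_w0_def ps_zeta_def)
  have next_row: "Pi (Suc N) 0 k + of_nat (N + 2) * Z (Suc (Suc N)) 0 0 * Pi 0 0 k = 0" for k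
  proof -
    have "Z (a + 1) 0 0 = (if a = 0 then 1 else 0)" if "a \<le> N" for a
      using Z_agree that by (simp add: ps_agree_w0_def ps_z_def)
    then show ?thesis
      using slope_w0[of "Suc N" k]
      by (simp add: DZ_mult_coeff_w0 sum_atMost_eq_single[where a=0])
  qed
  have Z_next: "Z (Suc (Suc N)) 0 0 = 0"
  proof -
    have "(of_nat (N + 2) :: complex) \<noteq> 0" by (simp only: of_nat_eq_0_iff)
    then show ?thesis using next_row[of 1] Pi_1 Pi_0 by (simp del: of_nat_add)
  qed
  have "Pi (Suc N) 0 k = ps_zeta (Suc N) 0 k" for k
    using next_row[of k] Pi_0 Pi_1 by (simp add: Z_next ps_zeta_def)
  moreover have "Z (Suc (Suc N)) 0 k = ps_z (Suc (Suc N)) 0 k" for k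
    using Z_next Z_zeta_free by (cases "k = 0") (auto simp: zeta_free_def ps_z_def)
  ultimately show ?case
    using Pi_agree Z_agree by (auto simp: ps_agree_w0_def le_Suc_eq)
qed

theorem Phi_eq_Phis_w0: "Phi i 0 k = Phis i 0 k"
proof -
  have Pi_agree: "ps_agree_w0 i Pi ps_zeta" and Z_agree: "ps_agree_w0 (Suc i) Z ps_z"
    using Pi_and_Z_agree_w0 by simp_all
  have Pi_w0: "Pi a 0 c = ps_zeta a 0 c" for a c
    using Pi_and_Z_agree_w0[of a] by (simp add: ps_agree_w0_def)
  have "ps_D m Phi Pi i 0 k = Phi i 0 k - (if i = 0 \<and> m = 1 \<and> k = 2 then 1 else 0)"
    by (simp add: ps_D_coeff_w0[OF m_pos] Pi_w0 ps_zeta_def sum_atMost_eq_single[where a=i]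
        sum_atMost_eq_single[where a=k])
  moreover have
    "ps_D m Phi Pi i 0 k + (if m = 1 \<and> 1 \<le> k then Pi i 0 (k - 1) else 0) = Phis i 0 k"
    using slope_equation_w0[of i k]
      ps_comp_coeff_w0[OF W_w_divisible ps_agree_w0_mono[OF Z_agree] Pi_agree]
    by (simp add: DZ_mult_coeff_w0_eq[OF Z_agree])
  ultimately show ?thesis by (auto simp: Pi_w0 ps_zeta_def split: if_splits)
qed

end

lemma admissible_transforms_ode:
  assumes m: "1 \<le> m" and adm: "admissible m Phi Phis f g0 g"
  obtains Z W where "transforms_ode m Phi Phis Z W"
    "zeta_free Z" "Z 0 0 0 = 0" "Z 1 0 0 = 1"
    "zeta_free W" "ps_lowest_w_pow W 1" "\<And>i j k. j \<le> m \<Longrightarrow> W (Suc i) j k = 0"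
proof -
  define Z where "Z = ps_add ps_z (ps_of2 f)"
  define W where "W = ps_add ps_w (ps_add (ps_mult ps_w (ps_of_w g0))
                                         (ps_mult (ps_pow ps_w m) (ps_of2 g)))"
  have f: "f 0 0 = 0" "f 1 0 = 0" and g0: "g0 0 = 0"
    and g: "\<And>i j. i = 0 \<or> j = 0 \<Longrightarrow> g i j = 0"
    and tr: "transforms_ode m Phi Phis Z W"
    using adm unfolding admissible_def Let_def Z_def W_def by auto
  have Z: "Z i j k = (if k = 0 then (if i = 1 \<and> j = 0 then 1 else 0) + f i j else 0)" for i j k
    by (simp add: Z_def ps_add_def ps_z_def ps_of2_def)
  have W: "W i j k = (if k = 0 then (if i = 0 \<and> j = 1 then 1 else 0)
      + (if i = 0 \<and> 1 \<le> j then g0 (j - 1) else 0)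
      + (if m \<le> j then g i (j - m) else 0) else 0)" for i j k
    by (simp add: W_def ps_add_def ps_variables_monom ps_pow_monom ps_mult_monom_left ps_of_w_def
        ps_of2_def) (simp add: ps_monom_def)
  show ?thesis
  proof (rule that[OF tr])
    show "zeta_free Z" "Z 0 0 0 = 0" "Z 1 0 0 = 1"
      using f by (simp_all add: zeta_free_def Z)
    show "zeta_free W" by (simp add: zeta_free_def W)
    show "ps_lowest_w_pow W 1"
      using m g0 g by (auto simp: ps_lowest_w_pow_def ps_w_divisible_def W)
    show "W (Suc i) j k = 0" if "j \<le> m" for i j k
      using that g by (auto simp: W)
  qed
qed

theorem lemma4p2:
  fixes m :: nat and Phi Phis :: ps3
  assumes "m \<ge> 1"
    and "\<forall>i j k. k < 2 \<longrightarrow> Phi i j k = 0"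
    and "\<forall>i j k. k < 2 \<longrightarrow> Phis i j k = 0"
    and "\<exists>f g0 g. admissible m Phi Phis f g0 g"
  shows "coef_A Phi 0 0 = coef_A Phis 0 0 \<and> coef_A Phi 1 0 = coef_A Phis 1 0 \<and>
         coef_B Phi 0 0 = coef_B Phis 0 0 \<and> coef_B Phi 1 0 = coef_B Phis 1 0"
proof -
  obtain f g0 g where "admissible m Phi Phis f g0 g"
    using assms(4) by blast
  then obtain Z W where tr: "transforms_ode m Phi Phis Z W"
    and Z: "zeta_free Z" "Z 0 0 0 = 0" "Z 1 0 0 = 1"
    and W: "zeta_free W" "ps_lowest_w_pow W 1" "\<And>i j k. j \<le> m \<Longrightarrow> W (Suc i) j k = 0"
    using admissible_transforms_ode[OF assms(1)] by blast
  obtain Pi where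
    "\<And>i k. ps_mult (ps_D m Phi Z) Pi i 0 k = (if i = 0 \<and> k = 1 then 1 else 0)"
    "\<And>i k. ps_D m Phi Pi i 0 k + (if m = 1 \<and> 1 \<le> k then Pi i 0 (k - 1) else 0)
       = ps_mult (ps_D m Phi Z) (ps_comp Phis Z W Pi) i 0 k"
    using transforms_ode_coeffs_w0[OF assms(1) tr W] by blast
  then interpret transformation_on_w0 m Phi Phis Z W Pi
    using assms(1-3) Z W(2) by unfold_locales (simp_all add: ps_lowest_w_pow_def)
  show ?thesis by (simp add: coef_A_def coef_B_def Phi_eq_Phis_w0)
qed

end
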